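(* Let $p(n)=\sum_{k=0}^d a_k n^k$ be a polynomial with real coefficients $a_0,\ldots,a_d$, and let $p_k(n)=a_k n^k$ denote its terms. Then the sequence $\{p(n)\bmod 1\}_{n\ge0}$ in $\mathbb{T}$ has the repetition property if and only if the sequences $\{p_k(n)\bmod 1\}_{n\ge0}$, $0\le k\le d$, have the joint repetition property.
   Context: $\mathbb{T}=\mathbb{R}/\mathbb{Z}$ with metric $\mathrm{dist}(x,y)=\langle x-y\rangle$, where $\langle\tau\rangle=\min\{|\hat\tau-p|:p\in\mathbb{Z}\}$ for any representative $\hat\tau\in\mathbb{R}$ of $\tau$. $\mathbb{Z}_+=\{1,2,\ldots\}$. A sequence $\{\omega_n\}_{n\ge0}$ in a metric space $\Omega$ has the repetition property if for every $\varepsilon>0$ and $r \in \mathbb{Z}_+$ there exists $q \in \mathbb{Z}_+$ such that $\mathrm{dist}(\omega_n,\omega_{n+q}) < \varepsilon$ for $n = 0,1,\ldots, rq$. A family of sequences has the joint repetition property if each of them has the repetition property and, for each finite subfamily and each $\varepsilon>0$, $r\in\mathbb{Z}_+$, a single $q\in\mathbb{Z}_+$ can be chosen that works simultaneously for all sequences in the subfamily. *)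

theory Defs
  imports "HOL-Analysis.Analysis"
begin

text \<open>Points of the torus T = R/Z are represented by real representatives.
  tnorm t is the distance from t to the nearest integer, i.e. the paper's
  angle-bracket norm; the torus metric is tdist x y = tnorm (x - y),
  which depends only on the classes of x and y mod 1.\<close>

definition tnorm :: "real \<Rightarrow> real" where
  "tnorm t = (INF p\<in>(\<int>::real set). \<bar>t - p\<bar>)"

definition tdist :: "real \<Rightarrow> real \<Rightarrow> real" where
  "tdist x y = tnorm (x - y)"

definition repetition_property :: "(nat \<Rightarrow> real) \<Rightarrow> bool" where
  "repetition_property w \<longleftrightarrow>
     (\<forall>\<epsilon>>0. \<forall>r::nat. r \<ge> 1 \<longrightarrow>
        (\<exists>q::nat. q \<ge> 1 \<and> (\<forall>n\<in>{0..r*q}. tdist (w n) (w (n + q)) < \<epsilon>)))"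

definition joint_repetition_property :: "'i set \<Rightarrow> ('i \<Rightarrow> nat \<Rightarrow> real) \<Rightarrow> bool" where
  "joint_repetition_property I w \<longleftrightarrow>
     (\<forall>i\<in>I. repetition_property (w i)) \<and>
     (\<forall>F. F \<subseteq> I \<longrightarrow> finite F \<longrightarrow>
        (\<forall>\<epsilon>>0. \<forall>r::nat. r \<ge> 1 \<longrightarrow>
          (\<exists>q::nat. q \<ge> 1 \<and> (\<forall>i\<in>F. \<forall>n\<in>{0..r*q}. tdist (w i n) (w i (n + q)) < \<epsilon>))))"

end

theory Submission
  imports Defs
begin

text \<open>
  Write p(x) = a_0 + ... + a_d x^d and \<Delta>_q f(x) = f(x + q) - f(x).  That the joint
  repetition property of the monomials implies the repetition property of p is the
  triangle inequality for the distance to the nearest integer.  Conversely, we show by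
  induction on d that for all \<epsilon> > 0 and r there are R, \<eta>, M such that if \<Delta>_q p(n) is
  \<eta>-close to the integers for n \<le> R q, then every term a_k C(k,j) (Mq)^(k-j) n^j of the
  expansion of \<Delta>_{Mq}(a_k x^k) is \<epsilon>-close to the integers for n \<le> r M q.  The top
  coefficient is controlled by a Vinogradov-type estimate (a polynomial of degree j that
  is \<delta>-close to the integers on 0..N has leading coefficient b with \<parallel>j! b\<parallel> N^j \<le> C \<delta>)
  applied to the differences \<Delta>_q^(d-j) p; after removing the top term, a telescoping
  argument shows that the lower part satisfies the induction hypothesis.
\<close>

subsection \<open>The distance to the nearest integer\<close>

lemma tnorm_round: "tnorm t = \<bar>t - of_int (round t)\<bar>"
proof -
  have min: "\<bar>t - of_int (round t)\<bar> \<le> \<bar>t - of_int m\<bar>" for m :: int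
  proof (cases "m = round t")
    case False
    then have "(1::real) \<le> of_int \<bar>m - round t\<bar>" by linarith
    then have "\<bar>of_int m - of_int (round t)\<bar> \<ge> (1::real)" by simp
    moreover have "\<bar>of_int (round t) - t\<bar> \<le> 1/2" by (rule of_int_round_abs_le)
    ultimately show ?thesis by linarith
  qed simp
  have "(INF p\<in>(\<int>::real set). \<bar>t - p\<bar>) = \<bar>t - of_int (round t)\<bar>"
  proof (rule antisym)
    show "(INF p\<in>(\<int>::real set). \<bar>t - p\<bar>) \<le> \<bar>t - of_int (round t)\<bar>"
      by (rule cINF_lower) (auto intro: bdd_belowI[of _ 0])
    show "\<bar>t - of_int (round t)\<bar> \<le> (INF p\<in>(\<int>::real set). \<bar>t - p\<bar>)"
      by (rule cINF_greatest) (auto elim!: Ints_cases simp: min)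
  qed
  then show ?thesis by (simp add: tnorm_def)
qed

lemma tnorm_le: "tnorm t \<le> \<bar>t - of_int m\<bar>"
  unfolding tnorm_def by (rule cINF_lower) (auto intro: bdd_belowI[of _ 0])

lemma tnorm_nonneg: "tnorm t \<ge> 0"
  by (simp add: tnorm_round)

lemma tnorm_abs: "tnorm t \<le> \<bar>t\<bar>"
  using tnorm_le[of t 0] by simp

lemma tnorm_add: "tnorm (x + y) \<le> tnorm x + tnorm y"
proof -
  have "tnorm (x + y) \<le> \<bar>x + y - of_int (round x + round y)\<bar>" by (rule tnorm_le)
  also have "\<dots> \<le> \<bar>x - of_int (round x)\<bar> + \<bar>y - of_int (round y)\<bar>" by simp
  finally show ?thesis by (simp add: tnorm_round)
qed

lemma tnorm_minus: "tnorm (- x) = tnorm x"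
proof -
  have "tnorm (- x) \<le> tnorm x" for x
    using tnorm_le[of "- x" "- round x"] by (simp add: tnorm_round abs_minus_commute)
  from this[of x] this[of "- x"] show ?thesis by simp
qed

lemma tnorm_diff: "tnorm (x - y) \<le> tnorm x + tnorm y"
  using tnorm_add[of x "- y"] by (simp add: tnorm_minus)

lemma tnorm_commute: "tnorm (x - y) = tnorm (y - x)"
  using tnorm_minus[of "x - y"] by simp

lemma tnorm_int_add: "tnorm (x + of_int m) = tnorm x"
proof -
  have "tnorm (x + of_int m) \<le> tnorm x" for x m
    using tnorm_le[of "x + of_int m" "round x + m"] by (simp add: tnorm_round)
  from this[of x m] this[of "x + of_int m" "- m"] show ?thesis by simp
qed

lemma tnorm_small: "\<bar>x\<bar> < 1/2 \<Longrightarrow> tnorm x = \<bar>x\<bar>"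
proof -
  assume small: "\<bar>x\<bar> < 1/2"
  have "\<bar>x\<bar> \<le> \<bar>x - of_int (round x)\<bar>"
  proof (cases "round x = 0")
    case False
    then have "(1::real) \<le> of_int \<bar>round x\<bar>" by linarith
    then show ?thesis using small by simp
  qed simp
  then show ?thesis using tnorm_abs[of x] by (simp add: tnorm_round)
qed

lemma tnorm_mult_nat: "tnorm (of_nat m * x) \<le> of_nat m * tnorm x"
proof (induction m)
  case 0 then show ?case by (simp add: tnorm_round)
next
  case (Suc m)
  have "tnorm (of_nat (Suc m) * x) = tnorm (of_nat m * x + x)" by (simp add: algebra_simps)
  also have "\<dots> \<le> tnorm (of_nat m * x) + tnorm x" by (rule tnorm_add)
  finally show ?case using Suc by (simp add: algebra_simps)
qed

lemma tnorm_sum: "tnorm (\<Sum>i\<in>A. f i) \<le> (\<Sum>i\<in>A. tnorm (f i))"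
proof (induction A rule: infinite_finite_induct)
  case (insert x F)
  then show ?case using tnorm_add[of "f x" "sum f F"] by simp
qed (simp_all add: tnorm_round)

lemma tnorm_frac_mult_nat: "tnorm ((u - of_int (round u)) * of_nat m) = tnorm (u * of_nat m)"
proof -
  have "(u - of_int (round u)) * of_nat m = u * of_nat m + of_int (- round u * int m)"
    by (simp add: algebra_simps)
  then show ?thesis by (simp only: tnorm_int_add)
qed

subsection \<open>Finite differences of polynomial functions\<close>

definition fdiff :: "real \<Rightarrow> (real \<Rightarrow> real) \<Rightarrow> real \<Rightarrow> real" where
  "fdiff s h x = h (x + s) - h x"

definition poly_fun :: "nat \<Rightarrow> real \<Rightarrow> (real \<Rightarrow> real) \<Rightarrow> bool" where
  "poly_fun j b h \<longleftrightarrow> (\<exists>c. c j = b \<and> (\<forall>x. h x = (\<Sum>i\<le>j. c i * x ^ i)))"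

definition almost_integral :: "(real \<Rightarrow> real) \<Rightarrow> nat \<Rightarrow> real \<Rightarrow> bool" where
  "almost_integral h N \<delta> \<longleftrightarrow> (\<forall>n\<le>N. tnorm (h (real n)) \<le> \<delta>)"

lemma almost_integral_nonneg: "almost_integral h N \<delta> \<Longrightarrow> 0 \<le> \<delta>"
  unfolding almost_integral_def using tnorm_nonneg order_trans by blast

lemma almost_integral_mono:
  "almost_integral h N \<delta> \<Longrightarrow> N' \<le> N \<Longrightarrow> \<delta> \<le> \<delta>' \<Longrightarrow> almost_integral h N' \<delta>'"
  unfolding almost_integral_def by (meson order_trans)

lemma fdiff_add: "fdiff s (\<lambda>x. f x + g x) x = fdiff s f x + fdiff s g x"
  by (simp add: fdiff_def)

lemma tdist_fdiff: "tdist (f (real n)) (f (real (n + q))) = tnorm (fdiff (real q) f (real n))"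
  unfolding tdist_def fdiff_def by (simp add: tnorm_commute)

lemma fdiff_telescope:
  "fdiff (real (m * q)) f x = (\<Sum>i<m. fdiff (real q) f (x + real (i * q)))"
proof -
  define g where "g i = f (x + real (i * q))" for i
  have "(\<Sum>i<m. fdiff (real q) f (x + real (i * q))) = (\<Sum>i<m. g (Suc i) - g i)"
    unfolding g_def fdiff_def by (rule sum.cong) (simp_all add: algebra_simps)
  also have "\<dots> = g m - g 0" by (rule sum_lessThan_telescope)
  also have "\<dots> = fdiff (real (m * q)) f x" unfolding g_def fdiff_def by simp
  finally show ?thesis by simp
qed

lemma power_shift_diff:
  fixes x s :: real
  shows "(x + s) ^ i - x ^ i = (\<Sum>l<i. of_nat (i choose l) * x ^ l * s ^ (i - l))"
proof -
  have "(x + s) ^ i = (\<Sum>l<Suc i. of_nat (i choose l) * x ^ l * s ^ (i - l))"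
    by (simp only: binomial_ring lessThan_Suc_atMost)
  then show ?thesis by simp
qed

lemma fdiff_poly_fun:
  assumes "poly_fun (Suc j) b h"
  shows "poly_fun j (real (Suc j) * b * s) (fdiff s h)"
proof -
  obtain c where c_top: "c (Suc j) = b" and h: "\<And>x. h x = (\<Sum>i\<le>Suc j. c i * x ^ i)"
    using assms unfolding poly_fun_def by blast
  define c' where "c' l = (\<Sum>i=Suc l..Suc j. c i * of_nat (i choose l) * s ^ (i - l))" for l
  have "c' j = real (Suc j) * b * s"
    by (simp add: c'_def c_top)
  moreover have "fdiff s h x = (\<Sum>l\<le>j. c' l * x ^ l)" for x
  proof -
    have "fdiff s h x = (\<Sum>i\<le>Suc j. c i * ((x + s) ^ i - x ^ i))"
      by (simp only: fdiff_def h sum_subtractf right_diff_distrib)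
    also have "\<dots> = (\<Sum>i\<le>Suc j. \<Sum>l<i. c i * of_nat (i choose l) * s ^ (i - l) * x ^ l)"
      unfolding power_shift_diff sum_distrib_left by (rule sum.cong) (simp_all add: ac_simps)
    also have "\<dots> = (\<Sum>l<Suc j. \<Sum>i=Suc l..Suc j. c i * of_nat (i choose l) * s ^ (i - l) * x ^ l)"
      by (rule sum.nested_swap')
    also have "\<dots> = (\<Sum>l\<le>j. c' l * x ^ l)"
      by (simp only: c'_def sum_distrib_right lessThan_Suc_atMost)
    finally show ?thesis .
  qed
  ultimately show ?thesis unfolding poly_fun_def by blast
qed

lemma funpow_fdiff_poly_fun:
  assumes "poly_fun k b h" "i \<le> k"
  shows "poly_fun (k - i) (b * s ^ i * fact k / fact (k - i)) ((fdiff s ^^ i) h)"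
  using assms(2)
proof (induction i)
  case 0
  then show ?case using assms(1) by simp
next
  case (Suc i)
  then have ki: "k - i = Suc (k - Suc i)" by simp
  have "poly_fun (Suc (k - Suc i)) (b * s ^ i * fact k / fact (k - i)) ((fdiff s ^^ i) h)"
    using Suc by (simp flip: ki)
  from fdiff_poly_fun[OF this, of s]
  have P: "poly_fun (k - Suc i) (real (Suc (k - Suc i)) * (b * s ^ i * fact k / fact (k - i)) * s)
          ((fdiff s ^^ Suc i) h)" by simp
  have "real (Suc (k - Suc i)) * (b * s ^ i * fact k / fact (k - i)) * s
      = b * s ^ Suc i * fact k / fact (k - Suc i)"
  proof -
    have cancel: "(m::real) > 0 \<Longrightarrow> m * (X / (m * G)) * s = X * s / G" for m G X
      by (cases "G = 0") simp_all
    have f: "fact (k - i) = real (Suc (k - Suc i)) * (fact (k - Suc i) :: real)"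
      by (simp only: ki fact_Suc)
    have "real (Suc (k - Suc i)) * (b * s ^ i * fact k / (real (Suc (k - Suc i)) * fact (k - Suc i))) * s
        = b * s ^ i * fact k * s / fact (k - Suc i)"
      by (rule cancel) simp
    also have "b * s ^ i * fact k * s = b * s ^ Suc i * fact k"
      by (simp only: power_Suc mult_ac)
    finally show ?thesis unfolding f .
  qed
  with P show ?case by simp
qed

lemma poly_fun_0: "poly_fun 0 b h \<Longrightarrow> h x = b"
  unfolding poly_fun_def by auto

lemma funpow_fdiff_const:
  assumes "poly_fun k b h"
  shows "(fdiff s ^^ k) h x = b * s ^ k * fact k"
  using poly_fun_0 funpow_fdiff_poly_fun[OF assms order_refl, of s] by simp

lemma tnorm_funpow_fdiff:
  assumes "almost_integral f M \<delta>"
  shows "n + i * s \<le> M \<Longrightarrow> tnorm ((fdiff (real s) ^^ i) f (real n)) \<le> 2 ^ i * \<delta>"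
proof (induction i arbitrary: n)
  case 0
  then show ?case using assms by (simp add: almost_integral_def)
next
  case (Suc i)
  have next_pt: "tnorm ((fdiff (real s) ^^ i) f (real (n + s))) \<le> 2 ^ i * \<delta>"
    using Suc.IH[of "n + s"] Suc.prems by (simp add: algebra_simps)
  have this_pt: "tnorm ((fdiff (real s) ^^ i) f (real n)) \<le> 2 ^ i * \<delta>"
    using Suc.IH[of n] Suc.prems by simp
  have "(fdiff (real s) ^^ Suc i) f (real n)
      = (fdiff (real s) ^^ i) f (real (n + s)) - (fdiff (real s) ^^ i) f (real n)"
    by (simp add: fdiff_def)
  then have "tnorm ((fdiff (real s) ^^ Suc i) f (real n))
      \<le> tnorm ((fdiff (real s) ^^ i) f (real (n + s))) + tnorm ((fdiff (real s) ^^ i) f (real n))"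
    by (simp only: tnorm_diff)
  then show ?case using next_pt this_pt by simp
qed

subsection \<open>Small values force a small leading coefficient\<close>

lemma power_Suc_diff_le:
  fixes x :: real
  assumes "x \<ge> 0"
  shows "(x + 1) ^ Suc j - x ^ Suc j \<le> real (Suc j) * (x + 1) ^ j"
proof -
  have "(x + 1) ^ Suc j - x ^ Suc j = ((x + 1) - x) * (\<Sum>i<Suc j. x ^ (Suc j - Suc i) * (x + 1) ^ i)"
    by (rule power_diff_sumr2)
  also have "\<dots> = (\<Sum>i<Suc j. x ^ (j - i) * (x + 1) ^ i)" by simp
  also have "\<dots> \<le> (\<Sum>i<Suc j. (x + 1) ^ j)"
  proof (rule sum_mono)
    fix i assume "i \<in> {..<Suc j}"
    then have "i \<le> j" by simp
    have "x ^ (j - i) * (x + 1) ^ i \<le> (x + 1) ^ (j - i) * (x + 1) ^ i"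
      using assms by (intro mult_right_mono power_mono) auto
    also have "\<dots> = (x + 1) ^ j"
      using \<open>i \<le> j\<close> by (simp flip: power_add)
    finally show "x ^ (j - i) * (x + 1) ^ i \<le> (x + 1) ^ j" .
  qed
  finally show ?thesis by simp
qed

lemma power_increment_le:
  assumes "s < S"
  shows "real (Suc s) ^ Suc j - real s ^ Suc j \<le> real (Suc j) * real S ^ j"
proof -
  have "real (Suc s) ^ Suc j - real s ^ Suc j \<le> real (Suc j) * (real s + 1) ^ j"
    using power_Suc_diff_le[of "real s" j] by (simp add: add.commute)
  also have "\<dots> \<le> real (Suc j) * real S ^ j"
    using assms by (intro mult_left_mono power_mono) auto
  finally show ?thesis .
qed

text \<open>Lifting from the torus to the reals: a sequence starting at 0 whose increments are
  small and whose terms stay A-close to the integers stays within A of 0.\<close>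
lemma abs_le_if_small_increments:
  fixes f :: "nat \<Rightarrow> real"
  assumes "f 0 = 0" and close: "\<And>s. s \<le> S \<Longrightarrow> tnorm (f s) \<le> A"
    and incr: "\<And>s. s < S \<Longrightarrow> \<bar>f (Suc s) - f s\<bar> \<le> B" and "A + B < 1/2"
  shows "\<bar>f S\<bar> \<le> A"
proof -
  have "s \<le> S \<longrightarrow> \<bar>f s\<bar> \<le> A" for s
  proof (induction s)
    case 0
    show ?case using assms(1) close[of 0] tnorm_nonneg[of "f 0"] by simp
  next
    case (Suc s)
    show ?case
    proof
      assume s: "Suc s \<le> S"
      have "\<bar>f (Suc s)\<bar> \<le> \<bar>f s\<bar> + \<bar>f (Suc s) - f s\<bar>" by linarith
      also have "\<dots> \<le> A + B" using Suc.IH incr s by (simp add: add_mono)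
      finally have "tnorm (f (Suc s)) = \<bar>f (Suc s)\<bar>" using assms(4) by (intro tnorm_small) simp
      then show "\<bar>f (Suc s)\<bar> \<le> A" using close[OF s] by simp
    qed
  qed
  then show ?thesis by simp
qed

lemma abs_le_if_multiples_close:
  fixes e A W :: real
  assumes close: "\<And>s. s \<le> S \<Longrightarrow> tnorm (e * real s ^ Suc j) \<le> A"
    and weak: "\<bar>e\<bar> * real S ^ j \<le> W" and small: "A + real (Suc j) * W < 1/2"
  shows "\<bar>e\<bar> * real S ^ Suc j \<le> A"
proof -
  have incr: "\<bar>e * real (Suc s) ^ Suc j - e * real s ^ Suc j\<bar> \<le> real (Suc j) * W"
    if "s < S" for s
  proof -
    have "real s ^ Suc j \<le> real (Suc s) ^ Suc j" by (intro power_mono) auto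
    then have nonneg: "0 \<le> real (Suc s) ^ Suc j - real s ^ Suc j" by linarith
    have "\<bar>e * real (Suc s) ^ Suc j - e * real s ^ Suc j\<bar>
        = \<bar>e\<bar> * \<bar>real (Suc s) ^ Suc j - real s ^ Suc j\<bar>"
      by (simp only: right_diff_distrib[symmetric] abs_mult)
    also have "\<dots> = \<bar>e\<bar> * (real (Suc s) ^ Suc j - real s ^ Suc j)"
      by (simp only: abs_of_nonneg[OF nonneg])
    also have "\<dots> \<le> \<bar>e\<bar> * (real (Suc j) * real S ^ j)"
      using power_increment_le[OF that] by (intro mult_left_mono) auto
    also have "\<dots> \<le> real (Suc j) * W"
      using mult_left_mono[OF weak, of "real (Suc j)"] by (simp add: mult_ac)
    finally show ?thesis .
  qed
  have "\<bar>e * real S ^ Suc j\<bar> \<le> A"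
    using abs_le_if_small_increments[where f = "\<lambda>s. e * real s ^ Suc j", OF _ close incr small]
    by simp
  then show ?thesis by (simp add: abs_mult)
qed

lemma power_le_div_bound:
  assumes "1 \<le> J" "J \<le> N"
  shows "real N ^ J \<le> (2 * real J) ^ J * real (N div J) ^ J"
proof -
  define S where "S = N div J"
  have "N = J * S + N mod J" unfolding S_def by simp
  moreover have "N mod J < J" using assms(1) by simp
  ultimately have NS: "N < J * (S + 1)" by (simp add: algebra_simps)
  then have "S \<ge> 1" using assms(2) by (cases S) auto
  then have "J * (S + 1) \<le> J * (2 * S)" by (intro mult_le_mono2) simp
  then have "N \<le> J * (2 * S)" using NS by linarith
  then have "N \<le> 2 * J * S" by (simp add: mult_ac)
  then have "real N \<le> 2 * real J * real S" by (metis of_nat_le_iff of_nat_mult of_nat_numeral)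
  then have "real N ^ J \<le> (2 * real J * real S) ^ J" by (intro power_mono) auto
  then show ?thesis unfolding S_def by (simp add: power_mult_distrib)
qed

definition leading_coeff_estimate :: "nat \<Rightarrow> real \<Rightarrow> real \<Rightarrow> bool" where
  "leading_coeff_estimate j C c \<longleftrightarrow>
     (\<forall>h b N \<delta>. poly_fun j b h \<longrightarrow> almost_integral h N \<delta> \<longrightarrow> \<delta> \<le> c \<longrightarrow> j \<le> N \<longrightarrow>
        tnorm (fact j * b) * real N ^ j \<le> C * \<delta>)"

lemma leading_coeff_estimate_mono:
  "leading_coeff_estimate j C c \<Longrightarrow> C \<le> C' \<Longrightarrow> c' \<le> c \<Longrightarrow> leading_coeff_estimate j C' c'"
  unfolding leading_coeff_estimate_def
  by (smt (verit, best) almost_integral_nonneg mult_right_mono)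

lemma leading_coeff_first_diff:
  assumes "leading_coeff_estimate j C c" "poly_fun (Suc j) b h" "almost_integral h N \<delta>"
    "2 * \<delta> \<le> c" "Suc j \<le> N"
  shows "tnorm (fact (Suc j) * b) * real (N - 1) ^ j \<le> C * (2 * \<delta>)"
proof -
  have "poly_fun j (real (Suc j) * b * 1) (fdiff 1 h)"
    using fdiff_poly_fun[OF assms(2)] .
  moreover have "almost_integral (fdiff 1 h) (N - 1) (2 * \<delta>)"
    unfolding almost_integral_def
  proof (intro allI impI)
    fix n assume "n \<le> N - 1"
    then have "n + 1 * 1 \<le> N" using assms(5) by simp
    from tnorm_funpow_fdiff[OF assms(3) this] show "tnorm (fdiff 1 h (real n)) \<le> 2 * \<delta>" by simp
  qed
  moreover have "j \<le> N - 1" using assms(5) by simp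
  ultimately have "tnorm (fact j * (real (Suc j) * b * 1)) * real (N - 1) ^ j \<le> C * (2 * \<delta>)"
    using assms(1,4) unfolding leading_coeff_estimate_def by blast
  then show ?thesis by (simp add: fact_Suc mult_ac)
qed

lemma leading_coeff_multiples:
  assumes "poly_fun J b h" "almost_integral h N \<delta>" "J * s \<le> N"
  shows "tnorm (fact J * b * real s ^ J) \<le> 2 ^ J * \<delta>"
proof -
  have "(fdiff (real s) ^^ J) h (real 0) = b * real s ^ J * fact J"
    by (rule funpow_fdiff_const[OF assms(1)])
  moreover have "tnorm ((fdiff (real s) ^^ J) h (real 0)) \<le> 2 ^ J * \<delta>"
    using tnorm_funpow_fdiff[OF assms(2), of 0 J s] assms(3) by (simp add: mult.commute)
  ultimately show ?thesis by (simp add: mult_ac)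
qed

text \<open>The induction step of the estimate: the first differences bound the signed distance
  e of u = (j+1)! b to the integers weakly; together with the closeness of the multiples
  u s^(j+1) to the integers this lifts to a bound on |e| itself.\<close>
lemma leading_coeff_estimate_Suc:
  fixes j :: nat and C' c' :: real
  defines "J \<equiv> Suc j" and "K \<equiv> 4 * (2 ^ Suc j + 2 * real (Suc j) * C')"
  assumes IH: "leading_coeff_estimate j C' c'" and "C' > 0"
  shows "leading_coeff_estimate J ((2 * real J) ^ J * 2 ^ J) (min (c' / 2) (1 / K))"
  unfolding leading_coeff_estimate_def
proof (intro allI impI)
  fix h b N \<delta>
  assume hp: "poly_fun J b h" and hb: "almost_integral h N \<delta>"
    and hd: "\<delta> \<le> min (c' / 2) (1 / K)" and hN: "J \<le> N"
  have "K > 0" using \<open>C' > 0\<close> unfolding K_def by (simp add: add_pos_nonneg)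
  then have "\<delta> * K \<le> 1" using hd by (simp add: pos_le_divide_eq)
  define u where "u = fact J * b"
  define e where "e = u - of_int (round u)"
  define S where "S = N div J"
  have abs_e: "\<bar>e\<bar> = tnorm u" unfolding e_def by (simp add: tnorm_round)
  have "tnorm u * real (N - 1) ^ j \<le> C' * (2 * \<delta>)"
    using leading_coeff_first_diff[OF IH] hp hb hd hN unfolding u_def J_def by simp
  moreover have "real S ^ j \<le> real (N - 1) ^ j"
  proof (cases j)
    case (Suc j')
    then have "S \<le> N div 2" unfolding S_def J_def by (intro div_le_mono2) auto
    moreover have "N div 2 < N" using hN unfolding J_def by simp
    ultimately have "S \<le> N - 1" by linarith
    then show ?thesis by (intro power_mono) auto
  qed simp
  ultimately have weak: "\<bar>e\<bar> * real S ^ j \<le> C' * (2 * \<delta>)"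
    unfolding abs_e by (meson mult_left_mono order_trans tnorm_nonneg)
  have close: "tnorm (e * real s ^ J) \<le> 2 ^ J * \<delta>" if "s \<le> S" for s
  proof -
    have "J * s \<le> N" using that hN unfolding S_def
      by (metis div_times_less_eq_dividend mult.commute mult_le_mono2 order_trans)
    then show ?thesis
      using leading_coeff_multiples[OF hp hb] tnorm_frac_mult_nat[of u "s ^ J"]
      unfolding e_def u_def by (simp add: mult.assoc)
  qed
  have "2 ^ J * \<delta> + real J * (C' * (2 * \<delta>)) = \<delta> * K / 4"
    unfolding K_def J_def by (simp add: algebra_simps)
  also have "\<dots> < 1 / 2" using \<open>\<delta> * K \<le> 1\<close> by linarith
  finally have lifted: "\<bar>e\<bar> * real S ^ J \<le> 2 ^ J * \<delta>"
    using abs_le_if_multiples_close[OF close[unfolded J_def] weak] unfolding J_def by simp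
  have "tnorm u * real N ^ J \<le> \<bar>e\<bar> * ((2 * real J) ^ J * real S ^ J)"
    using power_le_div_bound[of J N] hN unfolding abs_e S_def J_def
    by (simp add: mult_left_mono tnorm_nonneg)
  also have "\<dots> = (2 * real J) ^ J * (\<bar>e\<bar> * real S ^ J)" by simp
  also have "\<dots> \<le> (2 * real J) ^ J * (2 ^ J * \<delta>)"
    using lifted by (intro mult_left_mono) auto
  finally show "tnorm (fact J * b) * real N ^ J \<le> (2 * real J) ^ J * 2 ^ J * \<delta>"
    unfolding u_def by (simp add: mult_ac)
qed

lemma leading_coeff_estimate_exists: "\<exists>C>0. \<exists>c>0. leading_coeff_estimate j C c"
proof (induction j)
  case 0
  have "leading_coeff_estimate 0 1 1"
    unfolding leading_coeff_estimate_def almost_integral_def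
    using poly_fun_0[of _ _ "real 0"] by fastforce
  then show ?case by (metis zero_less_one)
next
  case (Suc j)
  then obtain C' c' where "C' > 0" "c' > 0" "leading_coeff_estimate j C' c'" by blast
  with leading_coeff_estimate_Suc[of j C' c'] show ?case
    by (intro exI conjI) (auto simp: add_pos_nonneg)
qed

lemma leading_coeff_estimate_uniform: "\<exists>C>0. \<exists>c>0. \<forall>j<d. leading_coeff_estimate j C c"
proof (induction d)
  case (Suc d)
  obtain C c where "C > 0" "c > 0" and low: "\<forall>j<d. leading_coeff_estimate j C c"
    using Suc.IH by blast
  obtain C' c' where "C' > 0" "c' > 0" and top: "leading_coeff_estimate d C' c'"
    using leading_coeff_estimate_exists by blast
  have "\<forall>j<Suc d. leading_coeff_estimate j (max C C') (min c c')"
    using low top by (metis less_Suc_eq leading_coeff_estimate_mono max.cobounded1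
        max.cobounded2 min.cobounded1 min.cobounded2)
  then show ?case using \<open>C > 0\<close> \<open>c > 0\<close> \<open>c' > 0\<close> by (intro exI[of _ "max C C'"] conjI exI[of _ "min c c'"]) auto
qed (intro exI[of _ 1] conjI, auto)

subsection \<open>Control of the binomial expansion of a shifted monomial\<close>

text \<open>For n \<le> r q, c ((n + q)^k - n^k) is the sum of the k terms c C(k,j) q^(k-j) n^j,
  j < k.\<close>
definition expansion_small :: "real \<Rightarrow> nat \<Rightarrow> nat \<Rightarrow> nat \<Rightarrow> real \<Rightarrow> bool" where
  "expansion_small c k q r \<epsilon> \<longleftrightarrow>
     (\<forall>j<k. tnorm (c * real (k choose j) * real q ^ (k - j)) * (real r * real q) ^ j \<le> \<epsilon>)"

lemma expansion_small_mono_eps: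
  "expansion_small c k q r \<epsilon> \<Longrightarrow> \<epsilon> \<le> \<epsilon>' \<Longrightarrow> expansion_small c k q r \<epsilon>'"
  unfolding expansion_small_def by force

lemma expansion_small_mono_r:
  assumes "expansion_small c k q r' \<epsilon>" "r \<le> r'"
  shows "expansion_small c k q r \<epsilon>"
  unfolding expansion_small_def
proof (intro allI impI)
  fix j assume "j < k"
  have "(real r * real q) ^ j \<le> (real r' * real q) ^ j"
    using assms(2) by (intro power_mono mult_right_mono) auto
  then have "tnorm (c * real (k choose j) * real q ^ (k - j)) * (real r * real q) ^ j
      \<le> tnorm (c * real (k choose j) * real q ^ (k - j)) * (real r' * real q) ^ j"
    by (intro mult_left_mono tnorm_nonneg)
  then show "tnorm (c * real (k choose j) * real q ^ (k - j)) * (real r * real q) ^ j \<le> \<epsilon>"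
    using assms(1) \<open>j < k\<close> unfolding expansion_small_def by force
qed

lemma expansion_small_mult:
  assumes "expansion_small c k q r \<epsilon>"
  shows "expansion_small c k (M * q) r (real M ^ k * \<epsilon>)"
  unfolding expansion_small_def
proof (intro allI impI)
  fix j assume j: "j < k"
  define T where "T = tnorm (c * real (k choose j) * real q ^ (k - j))"
  have T: "T * (real r * real q) ^ j \<le> \<epsilon>"
    using assms j unfolding expansion_small_def T_def by blast
  have "c * real (k choose j) * real (M * q) ^ (k - j)
      = real (M ^ (k - j)) * (c * real (k choose j) * real q ^ (k - j))"
    by (simp add: power_mult_distrib)
  then have "tnorm (c * real (k choose j) * real (M * q) ^ (k - j)) \<le> real (M ^ (k - j)) * T"
    unfolding T_def by (simp only: tnorm_mult_nat)
  then have "tnorm (c * real (k choose j) * real (M * q) ^ (k - j)) * (real r * real (M * q)) ^ j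
      \<le> real (M ^ (k - j)) * T * (real r * real (M * q)) ^ j"
    by (intro mult_right_mono) auto
  also have "\<dots> = real M ^ (k - j) * real M ^ j * (T * (real r * real q) ^ j)"
    by (simp add: power_mult_distrib)
  also have "\<dots> \<le> real M ^ k * \<epsilon>"
    using T j by (simp add: mult_left_mono flip: power_add)
  finally show "tnorm (c * real (k choose j) * real (M * q) ^ (k - j)) * (real r * real (M * q)) ^ j
      \<le> real M ^ k * \<epsilon>" .
qed

lemma expansion_small_fdiff:
  assumes "expansion_small c k q r \<epsilon>" "n \<le> r * q"
  shows "tnorm (fdiff (real q) (\<lambda>x. c * x ^ k) (real n)) \<le> real k * \<epsilon>"
proof -
  have "fdiff (real q) (\<lambda>x. c * x ^ k) (real n)
      = (\<Sum>l<k. real (n ^ l) * (c * real (k choose l) * real q ^ (k - l)))"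
    unfolding fdiff_def right_diff_distrib[symmetric] power_shift_diff sum_distrib_left
    by (rule sum.cong) (simp_all add: mult_ac)
  then have "tnorm (fdiff (real q) (\<lambda>x. c * x ^ k) (real n))
      \<le> (\<Sum>l<k. tnorm (real (n ^ l) * (c * real (k choose l) * real q ^ (k - l))))"
    by (simp only: tnorm_sum)
  also have "\<dots> \<le> (\<Sum>l<k. \<epsilon>)"
  proof (rule sum_mono)
    fix l assume l: "l \<in> {..<k}"
    define T where "T = tnorm (c * real (k choose l) * real q ^ (k - l))"
    have "real n \<le> real r * real q" using assms(2) by (metis of_nat_le_iff of_nat_mult)
    then have "real (n ^ l) \<le> (real r * real q) ^ l" by (simp add: power_mono)
    then have "tnorm (real (n ^ l) * (c * real (k choose l) * real q ^ (k - l)))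
        \<le> (real r * real q) ^ l * T"
      unfolding T_def by (meson mult_right_mono order_trans tnorm_mult_nat tnorm_nonneg)
    also have "\<dots> \<le> \<epsilon>" using assms(1) l unfolding expansion_small_def T_def by (simp add: mult.commute)
    finally show "tnorm (real (n ^ l) * (c * real (k choose l) * real q ^ (k - l))) \<le> \<epsilon>" .
  qed
  finally show ?thesis by simp
qed

subsection \<open>The top coefficient\<close>

definition polysum :: "(nat \<Rightarrow> real) \<Rightarrow> nat \<Rightarrow> real \<Rightarrow> real" where
  "polysum a d x = (\<Sum>k\<le>d. a k * x ^ k)"

lemma poly_fun_polysum: "poly_fun d (a d) (polysum a d)"
  unfolding poly_fun_def polysum_def by blast

lemma polysum_Suc: "polysum a (Suc d) = (\<lambda>x. polysum a d x + a (Suc d) * x ^ Suc d)"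
  unfolding polysum_def by auto

lemma almost_integral_funpow_fdiff:
  assumes "0 < i" "i \<le> d" "almost_integral (fdiff (real q) (polysum a d)) ((2 * d + 1) * q) \<eta>"
  shows "almost_integral ((fdiff (real q) ^^ i) (polysum a d)) ((d + 1) * q) (2 ^ d * \<eta>)"
  unfolding almost_integral_def
proof (intro allI impI)
  fix n assume n: "n \<le> (d + 1) * q"
  obtain i' where i': "i = Suc i'" using assms(1) gr0_implies_Suc by blast
  then have split: "(fdiff (real q) ^^ i) (polysum a d)
      = (fdiff (real q) ^^ i') (fdiff (real q) (polysum a d))"
    by (simp only: funpow_Suc_right comp_def)
  have "n + i' * q \<le> (2 * d + 1) * q"
  proof -
    have "i' * q \<le> d * q" using assms(2) i' by (intro mult_le_mono1) simp
    moreover have "(2 * d + 1) * q = (d + 1) * q + d * q" by (simp add: algebra_simps)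
    ultimately show ?thesis using n by linarith
  qed
  then have "tnorm ((fdiff (real q) ^^ i') (fdiff (real q) (polysum a d)) (real n)) \<le> 2 ^ i' * \<eta>"
    by (rule tnorm_funpow_fdiff[OF assms(3)])
  moreover have "(2::real) ^ i' * \<eta> \<le> 2 ^ d * \<eta>"
    using assms i' almost_integral_nonneg by (intro mult_right_mono power_increasing) auto
  ultimately show "tnorm ((fdiff (real q) ^^ i) (polysum a d) (real n)) \<le> 2 ^ d * \<eta>"
    unfolding split by linarith
qed

text \<open>The j-th term of the expansion of \<Delta>_{d! q}(a_d x^d) is an integer multiple of the
  leading coefficient of \<Delta>_q^(d-j) p (times j!), which the estimate controls.\<close>
lemma top_coeff_term_bound:
  assumes est: "leading_coeff_estimate j C c" and "j < d" "q \<ge> 1"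
    and hyp: "almost_integral (fdiff (real q) (polysum a d)) ((2 * d + 1) * q) \<eta>"
    and "2 ^ d * \<eta> \<le> c"
  shows "tnorm (a d * real (d choose j) * real (fact d * q) ^ (d - j)) * (real r * real (fact d * q)) ^ j
    \<le> real ((d choose j) * fact d ^ (d - j - 1)) * (real r * real (fact d)) ^ j * (C * (2 ^ d * \<eta>))"
proof -
  define N where "N = (d + 1) * q"
  define K where "K = (d choose j) * fact d ^ (d - j - 1)"
  define X where "X = a d * real q ^ (d - j) * fact d"
  have "poly_fun j (X / fact j) ((fdiff (real q) ^^ (d - j)) (polysum a d))"
    using funpow_fdiff_poly_fun[OF poly_fun_polysum, of "d - j" d a "real q"] \<open>j < d\<close>
    unfolding X_def by simp
  moreover have "almost_integral ((fdiff (real q) ^^ (d - j)) (polysum a d)) N (2 ^ d * \<eta>)"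
    unfolding N_def using almost_integral_funpow_fdiff[OF _ _ hyp] \<open>j < d\<close> by simp
  moreover have "j \<le> N"
  proof -
    have "d + 1 \<le> (d + 1) * q" using mult_le_mono2[of 1 q "d + 1"] \<open>q \<ge> 1\<close> by simp
    then show ?thesis unfolding N_def using \<open>j < d\<close> by linarith
  qed
  ultimately have "tnorm (fact j * (X / fact j)) * real N ^ j \<le> C * (2 ^ d * \<eta>)"
    using est assms(5) unfolding leading_coeff_estimate_def by blast
  then have LX: "tnorm X * real N ^ j \<le> C * (2 ^ d * \<eta>)" by simp
  have "a d * real (d choose j) * real (fact d * q) ^ (d - j) = real K * X"
  proof -
    have "d - j = Suc (d - j - 1)" using \<open>j < d\<close> by simp
    then have "real (fact d * q) ^ (d - j) = real (fact d) ^ (d - j - 1) * real (fact d) * real q ^ (d - j)"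
      by (metis of_nat_mult power_Suc2 power_mult_distrib)
    then show ?thesis unfolding K_def X_def by (simp add: mult_ac)
  qed
  then have tK: "tnorm (a d * real (d choose j) * real (fact d * q) ^ (d - j)) \<le> real K * tnorm X"
    by (simp only: tnorm_mult_nat)
  have "(real r * real (fact d) * real q) ^ j \<le> (real r * real (fact d) * real N) ^ j"
    unfolding N_def by (intro power_mono mult_left_mono) auto
  then have rq: "(real r * real (fact d * q)) ^ j \<le> (real r * real (fact d)) ^ j * real N ^ j"
    by (simp add: power_mult_distrib mult_ac)
  have "tnorm (a d * real (d choose j) * real (fact d * q) ^ (d - j)) * (real r * real (fact d * q)) ^ j
      \<le> (real K * tnorm X) * ((real r * real (fact d)) ^ j * real N ^ j)"
    using tK rq by (intro mult_mono) (auto simp: tnorm_nonneg)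
  also have "\<dots> = real K * (real r * real (fact d)) ^ j * (tnorm X * real N ^ j)" by (simp add: mult_ac)
  also have "\<dots> \<le> real K * (real r * real (fact d)) ^ j * (C * (2 ^ d * \<eta>))"
    using LX by (intro mult_left_mono) auto
  finally show ?thesis unfolding K_def .
qed

lemma top_coeff_small:
  assumes "\<epsilon> > 0"
  shows "\<exists>\<eta>>0. \<forall>a q. q \<ge> 1 \<longrightarrow>
     almost_integral (fdiff (real q) (polysum a d)) ((2 * d + 1) * q) \<eta> \<longrightarrow>
     expansion_small (a d) d (fact d * q) r \<epsilon>"
proof -
  obtain C c where "C > 0" "c > 0" and est: "\<forall>j<d. leading_coeff_estimate j C c"
    using leading_coeff_estimate_uniform by blast
  define w where "w j = real ((d choose j) * fact d ^ (d - j - 1)) * (real r * real (fact d)) ^ j * C * 2 ^ d"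
    for j
  define B where "B = (\<Sum>j<d. w j)"
  have w_nonneg: "w j \<ge> 0" for j unfolding w_def using \<open>C > 0\<close> by simp
  then have "B \<ge> 0" unfolding B_def by (simp add: sum_nonneg)
  define \<eta> where "\<eta> = min (\<epsilon> / (B + 1)) (c / 2 ^ d)"
  have "\<eta> > 0" unfolding \<eta>_def using assms \<open>B \<ge> 0\<close> \<open>c > 0\<close> by simp
  have "expansion_small (a d) d (fact d * q) r \<epsilon>"
    if "q \<ge> 1" and hyp: "almost_integral (fdiff (real q) (polysum a d)) ((2 * d + 1) * q) \<eta>" for a q
    unfolding expansion_small_def
  proof (intro allI impI)
    fix j assume "j < d"
    have "\<eta> \<le> c / 2 ^ d" unfolding \<eta>_def by simp
    then have "2 ^ d * \<eta> \<le> c" by (simp add: le_divide_eq mult.commute)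
    then have "tnorm (a d * real (d choose j) * real (fact d * q) ^ (d - j))
        * (real r * real (fact d * q)) ^ j \<le> w j * \<eta>"
      using top_coeff_term_bound[OF est[rule_format, OF \<open>j < d\<close>] \<open>j < d\<close> \<open>q \<ge> 1\<close> hyp, of r]
      unfolding w_def by (simp only: mult.assoc)
    also have "\<dots> \<le> (B + 1) * \<eta>"
    proof (intro mult_right_mono)
      show "w j \<le> B + 1"
        using member_le_sum[of j "{..<d}" w] \<open>j < d\<close> w_nonneg unfolding B_def by simp
    qed (use \<open>\<eta> > 0\<close> in simp)
    also have "\<dots> \<le> \<epsilon>"
    proof -
      have "0 < B + 1" using \<open>B \<ge> 0\<close> by simp
      moreover have "\<eta> \<le> \<epsilon> / (B + 1)" unfolding \<eta>_def by simp
      ultimately show ?thesis by (simp only: pos_le_divide_eq mult.commute)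
    qed
    finally show "tnorm (a d * real (d choose j) * real (fact d * q) ^ (d - j))
        * (real r * real (fact d * q)) ^ j \<le> \<epsilon>" .
  qed
  then show ?thesis using \<open>\<eta> > 0\<close> by blast
qed

subsection \<open>Induction on the degree\<close>

text \<open>Removing the controlled top term: \<Delta>_{Mq} of the lower part is the telescoped sum of
  M differences \<Delta>_q p minus \<Delta>_{Mq}(a_(d+1) x^(d+1)).\<close>
lemma lower_part_almost_integral:
  assumes hyp: "almost_integral (fdiff (real q) (polysum a (Suc d))) ((R + 1) * M * q) \<eta>"
    and top: "expansion_small (a (Suc d)) (Suc d) (M * q) R \<epsilon>"
  shows "almost_integral (fdiff (real (M * q)) (polysum a d)) (R * (M * q)) (real M * \<eta> + real (Suc d) * \<epsilon>)"
  unfolding almost_integral_def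
proof (intro allI impI)
  fix n assume n: "n \<le> R * (M * q)"
  have "tnorm (fdiff (real (M * q)) (polysum a (Suc d)) (real n)) \<le> (\<Sum>i<M. \<eta>)"
  proof -
    have "tnorm (fdiff (real (M * q)) (polysum a (Suc d)) (real n))
        \<le> (\<Sum>i<M. tnorm (fdiff (real q) (polysum a (Suc d)) (real (n + i * q))))"
      unfolding fdiff_telescope by (simp add: tnorm_sum)
    also have "\<dots> \<le> (\<Sum>i<M. \<eta>)"
    proof (rule sum_mono)
      fix i assume "i \<in> {..<M}"
      then have "i * q \<le> M * q" by (intro mult_le_mono1) simp
      moreover have "(R + 1) * M * q = R * (M * q) + M * q" by (simp add: algebra_simps)
      ultimately have "n + i * q \<le> (R + 1) * M * q" using n by linarith
      then show "tnorm (fdiff (real q) (polysum a (Suc d)) (real (n + i * q))) \<le> \<eta>"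
        using hyp unfolding almost_integral_def by blast
    qed
    finally show ?thesis .
  qed
  moreover have "tnorm (fdiff (real (M * q)) (\<lambda>x. a (Suc d) * x ^ Suc d) (real n)) \<le> real (Suc d) * \<epsilon>"
    using expansion_small_fdiff[OF top] n by (simp add: mult.assoc)
  moreover have split: "fdiff (real (M * q)) (polysum a d) (real n)
      = fdiff (real (M * q)) (polysum a (Suc d)) (real n)
        - fdiff (real (M * q)) (\<lambda>x. a (Suc d) * x ^ Suc d) (real n)"
    unfolding polysum_Suc fdiff_add by simp
  moreover have "(\<Sum>i<M. \<eta>) = real M * \<eta>" by simp
  ultimately show "tnorm (fdiff (real (M * q)) (polysum a d) (real n)) \<le> real M * \<eta> + real (Suc d) * \<epsilon>"
    unfolding split using tnorm_diff[of "fdiff (real (M * q)) (polysum a (Suc d)) (real n)"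
        "fdiff (real (M * q)) (\<lambda>x. a (Suc d) * x ^ Suc d) (real n)"] by linarith
qed

text \<open>One induction step with all constants fixed: the top term is controlled with step
  M_1 q, and the lower part then satisfies the induction hypothesis for the step M_1 q.\<close>
lemma peel_top_term:
  assumes hyp: "almost_integral (fdiff (real q) (polysum a (Suc d))) ((R + 1) * M1 * q) \<eta>"
    and top: "expansion_small (a (Suc d)) (Suc d) (M1 * q) (max r R) \<epsilon>t"
    and low_bound: "real M1 * \<eta> + real (Suc d) * \<epsilon>t \<le> \<eta>'"
    and IH: "almost_integral (fdiff (real (M1 * q)) (polysum a d)) (R * (M1 * q)) \<eta>' \<Longrightarrow>
      \<forall>k\<le>d. expansion_small (a k) k (M2 * (M1 * q)) r \<epsilon>"
    and top_bound: "real M2 ^ Suc d * \<epsilon>t \<le> \<epsilon>"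
  shows "\<forall>k\<le>Suc d. expansion_small (a k) k (M2 * M1 * q) r \<epsilon>"
proof -
  have top_R: "expansion_small (a (Suc d)) (Suc d) (M1 * q) R \<epsilon>t"
    and top_r: "expansion_small (a (Suc d)) (Suc d) (M1 * q) r \<epsilon>t"
    using top by (simp_all add: expansion_small_mono_r)
  have "almost_integral (fdiff (real (M1 * q)) (polysum a d)) (R * (M1 * q)) \<eta>'"
    using lower_part_almost_integral[OF hyp top_R] low_bound
    by (rule almost_integral_mono[OF _ order_refl])
  then have low: "\<forall>k\<le>d. expansion_small (a k) k (M2 * (M1 * q)) r \<epsilon>" by (rule IH)
  have "expansion_small (a (Suc d)) (Suc d) (M2 * (M1 * q)) r \<epsilon>"
    using expansion_small_mult[OF top_r] top_bound by (rule expansion_small_mono_eps)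
  then show ?thesis using low by (simp add: le_Suc_eq mult.assoc)
qed

lemma all_coeffs_small:
  assumes "\<epsilon> > 0"
  shows "\<exists>R \<eta> M. R \<ge> 1 \<and> \<eta> > 0 \<and> M \<ge> 1 \<and> (\<forall>a q. q \<ge> 1 \<longrightarrow>
     almost_integral (fdiff (real q) (polysum a d)) (R * q) \<eta> \<longrightarrow>
     (\<forall>k\<le>d. expansion_small (a k) k (M * q) r \<epsilon>))"
proof (induction d)
  case 0
  show ?case by (intro exI[of _ 1] conjI) (auto simp: expansion_small_def)
next
  case (Suc d)
  obtain R2 \<eta>2 M2 where "R2 \<ge> 1" "\<eta>2 > 0" "M2 \<ge> 1" and IH: "\<And>a q. q \<ge> 1 \<Longrightarrow>
      almost_integral (fdiff (real q) (polysum a d)) (R2 * q) \<eta>2 \<Longrightarrow>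
      \<forall>k\<le>d. expansion_small (a k) k (M2 * q) r \<epsilon>"
    using Suc.IH by blast
  define \<epsilon>t where "\<epsilon>t = min (\<epsilon> / real M2 ^ Suc d) (\<eta>2 / (2 * real (Suc d)))"
  have "\<epsilon>t > 0" unfolding \<epsilon>t_def using assms \<open>\<eta>2 > 0\<close> \<open>M2 \<ge> 1\<close> by simp
  then obtain \<eta>1 where "\<eta>1 > 0" and top: "\<And>a q. q \<ge> 1 \<Longrightarrow>
      almost_integral (fdiff (real q) (polysum a (Suc d))) ((2 * Suc d + 1) * q) \<eta>1 \<Longrightarrow>
      expansion_small (a (Suc d)) (Suc d) (fact (Suc d) * q) (max r R2) \<epsilon>t"
    using top_coeff_small by blast
  define M1 :: nat where "M1 = fact (Suc d)"
  define R where "R = (R2 + 1) * M1 + (2 * Suc d + 1)"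
  define \<eta> where "\<eta> = min \<eta>1 (\<eta>2 / (2 * real M1))"
  have "M1 \<ge> 1" unfolding M1_def by (rule fact_ge_1)
  have "\<eta> > 0" unfolding \<eta>_def using \<open>\<eta>1 > 0\<close> \<open>\<eta>2 > 0\<close> \<open>M1 \<ge> 1\<close> by simp
  have "real M1 * \<eta> \<le> real M1 * (\<eta>2 / (2 * real M1))"
    unfolding \<eta>_def by (intro mult_left_mono) auto
  moreover have "real (Suc d) * \<epsilon>t \<le> real (Suc d) * (\<eta>2 / (2 * real (Suc d)))"
    unfolding \<epsilon>t_def by (intro mult_left_mono) auto
  ultimately have low_bound: "real M1 * \<eta> + real (Suc d) * \<epsilon>t \<le> \<eta>2"
    using \<open>M1 \<ge> 1\<close> by (simp del: of_nat_Suc)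
  have "0 < real M2 ^ Suc d" using \<open>M2 \<ge> 1\<close> by simp
  moreover have "\<epsilon>t \<le> \<epsilon> / real M2 ^ Suc d" unfolding \<epsilon>t_def by simp
  ultimately have top_bound: "real M2 ^ Suc d * \<epsilon>t \<le> \<epsilon>" by (simp only: pos_le_divide_eq mult.commute)
  have "\<forall>k\<le>Suc d. expansion_small (a k) k (M2 * M1 * q) r \<epsilon>"
    if "q \<ge> 1" and hyp: "almost_integral (fdiff (real q) (polysum a (Suc d))) (R * q) \<eta>" for a q
  proof (rule peel_top_term[OF _ _ low_bound _ top_bound])
    show "almost_integral (fdiff (real q) (polysum a (Suc d))) ((R2 + 1) * M1 * q) \<eta>"
      using hyp unfolding R_def by (rule almost_integral_mono) (simp_all add: algebra_simps)
    have "(2 * Suc d + 1) * q \<le> R * q" unfolding R_def by (intro mult_le_mono1) simp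
    moreover have "\<eta> \<le> \<eta>1" unfolding \<eta>_def by simp
    ultimately show "expansion_small (a (Suc d)) (Suc d) (M1 * q) (max r R2) \<epsilon>t"
      using top[OF \<open>q \<ge> 1\<close> almost_integral_mono[OF hyp]] unfolding M1_def by blast
    show "almost_integral (fdiff (real (M1 * q)) (polysum a d)) (R2 * (M1 * q)) \<eta>2 \<Longrightarrow>
        \<forall>k\<le>d. expansion_small (a k) k (M2 * (M1 * q)) r \<epsilon>"
      using IH \<open>M1 \<ge> 1\<close> \<open>q \<ge> 1\<close> by simp
  qed
  moreover have "R \<ge> 1" "M2 * M1 \<ge> 1" unfolding R_def using \<open>M1 \<ge> 1\<close> \<open>M2 \<ge> 1\<close> by simp_all
  ultimately show ?case using \<open>\<eta> > 0\<close> by blast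
qed

lemma joint_repetition_property_if_uniform:
  assumes "\<And>(\<epsilon>::real) (r::nat). \<epsilon> > 0 \<Longrightarrow> r \<ge> 1 \<Longrightarrow>
    \<exists>q::nat. q \<ge> 1 \<and> (\<forall>i\<in>I. \<forall>n\<in>{0..r*q}. tdist (w i n) (w i (n + q)) < \<epsilon>)"
  shows "joint_repetition_property I w"
  unfolding joint_repetition_property_def repetition_property_def
  using assms by (meson subsetD)

lemma joint_repetition_sum:
  assumes "finite I" "joint_repetition_property I w"
  shows "repetition_property (\<lambda>n. \<Sum>i\<in>I. w i n)"
  unfolding repetition_property_def
proof (intro allI impI)
  fix \<epsilon> :: real and r :: nat assume "\<epsilon> > 0" "r \<ge> 1"
  define \<epsilon>' where "\<epsilon>' = \<epsilon> / (real (card I) + 1)"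
  have "\<epsilon>' > 0" unfolding \<epsilon>'_def using \<open>\<epsilon> > 0\<close> by simp
  then obtain q where "q \<ge> 1" and
    hq: "\<forall>i\<in>I. \<forall>n\<in>{0..r * q}. tdist (w i n) (w i (n + q)) < \<epsilon>'"
    using assms \<open>r \<ge> 1\<close> unfolding joint_repetition_property_def by blast
  have "tdist (\<Sum>i\<in>I. w i n) (\<Sum>i\<in>I. w i (n + q)) < \<epsilon>" if "n \<in> {0..r * q}" for n
  proof -
    have "tdist (\<Sum>i\<in>I. w i n) (\<Sum>i\<in>I. w i (n + q)) = tnorm (\<Sum>i\<in>I. w i n - w i (n + q))"
      unfolding tdist_def by (simp only: sum_subtractf)
    also have "\<dots> \<le> (\<Sum>i\<in>I. tdist (w i n) (w i (n + q)))"
      unfolding tdist_def by (rule tnorm_sum)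
    also have "\<dots> \<le> (\<Sum>i\<in>I. \<epsilon>')"
      using hq that by (intro sum_mono) (simp add: less_imp_le)
    also have "\<dots> = real (card I) * \<epsilon>'" by simp
    also have "\<dots> < \<epsilon>" unfolding \<epsilon>'_def using \<open>\<epsilon> > 0\<close> by (simp add: field_simps)
    finally show ?thesis .
  qed
  then show "\<exists>q\<ge>1. \<forall>n\<in>{0..r * q}. tdist (\<Sum>i\<in>I. w i n) (\<Sum>i\<in>I. w i (n + q)) < \<epsilon>"
    using \<open>q \<ge> 1\<close> by blast
qed

text \<open>The repetition property of p yields the joint repetition property of its monomials:
  a repetition q of p with the parameters of the main estimate gives the common
  repetition M q of all monomials.\<close>
lemma repetition_imp_joint_monomials:
  assumes rp: "repetition_property (\<lambda>n. polysum a d (real n))"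
  shows "joint_repetition_property {0..d} (\<lambda>k n. a k * real n ^ k)"
proof (rule joint_repetition_property_if_uniform)
  fix \<epsilon> :: real and r :: nat assume "\<epsilon> > 0" "r \<ge> 1"
  define \<epsilon>' where "\<epsilon>' = \<epsilon> / (real d + 1)"
  have "\<epsilon>' > 0" unfolding \<epsilon>'_def using \<open>\<epsilon> > 0\<close> by simp
  then obtain R \<eta> M where "R \<ge> 1" "\<eta> > 0" "M \<ge> 1" and coeffs: "\<And>a q. q \<ge> 1 \<Longrightarrow>
      almost_integral (fdiff (real q) (polysum a d)) (R * q) \<eta> \<Longrightarrow>
      \<forall>k\<le>d. expansion_small (a k) k (M * q) r \<epsilon>'"
    using all_coeffs_small by blast
  obtain q where "q \<ge> 1" and
    hq: "\<forall>n\<in>{0..R * q}. tdist (polysum a d (real n)) (polysum a d (real (n + q))) < \<eta>"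
    using rp \<open>\<eta> > 0\<close> \<open>R \<ge> 1\<close> unfolding repetition_property_def by blast
  have "almost_integral (fdiff (real q) (polysum a d)) (R * q) \<eta>"
    unfolding almost_integral_def
  proof (intro allI impI)
    fix n assume "n \<le> R * q"
    then have "tdist (polysum a d (real n)) (polysum a d (real (n + q))) < \<eta>" using hq by simp
    then show "tnorm (fdiff (real q) (polysum a d) (real n)) \<le> \<eta>"
      unfolding tdist_fdiff[of "polysum a d" n q] by simp
  qed
  then have small: "\<forall>k\<le>d. expansion_small (a k) k (M * q) r \<epsilon>'" using coeffs \<open>q \<ge> 1\<close> by blast
  have "tdist (a k * real n ^ k) (a k * real (n + M * q) ^ k) < \<epsilon>"
    if "k \<in> {0..d}" "n \<in> {0..r * (M * q)}" for k n
  proof -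
    have "expansion_small (a k) k (M * q) r \<epsilon>'" "n \<le> r * (M * q)" using small that by auto
    from expansion_small_fdiff[OF this]
    have "tdist (a k * real n ^ k) (a k * real (n + M * q) ^ k) \<le> real k * \<epsilon>'"
      by (simp only: tdist_fdiff[of "\<lambda>x. a k * x ^ k" n "M * q"])
    also have "\<dots> \<le> real d * \<epsilon>'"
      using that \<open>\<epsilon>' > 0\<close> by (intro mult_right_mono) auto
    also have "\<dots> < \<epsilon>"
    proof -
      have "\<epsilon>' * (real d + 1) = \<epsilon>" unfolding \<epsilon>'_def by simp
      then show ?thesis using \<open>\<epsilon>' > 0\<close> by (simp add: algebra_simps)
    qed
    finally show ?thesis .
  qed
  moreover have "M * q \<ge> 1" using \<open>M \<ge> 1\<close> \<open>q \<ge> 1\<close> by simp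
  ultimately show "\<exists>q\<ge>1. \<forall>k\<in>{0..d}. \<forall>n\<in>{0..r * q}. tdist (a k * real n ^ k) (a k * real (n + q) ^ k) < \<epsilon>"
    by blast
qed

theorem theorem3p4:
  fixes a :: "nat \<Rightarrow> real" and d :: nat
  shows "repetition_property (\<lambda>n. \<Sum>k=0..d. a k * real n ^ k) \<longleftrightarrow>
         joint_repetition_property {0..d} (\<lambda>k n. a k * real n ^ k)"
proof
  have p: "(\<lambda>n. \<Sum>k=0..d. a k * real n ^ k) = (\<lambda>n. polysum a d (real n))"
    by (simp add: polysum_def atLeast0AtMost)
  show "repetition_property (\<lambda>n. \<Sum>k=0..d. a k * real n ^ k) \<Longrightarrow>
      joint_repetition_property {0..d} (\<lambda>k n. a k * real n ^ k)"
    unfolding p by (rule repetition_imp_joint_monomials)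
  show "repetition_property (\<lambda>n. \<Sum>k=0..d. a k * real n ^ k)"
    if "joint_repetition_property {0..d} (\<lambda>k n. a k * real n ^ k)"
    using joint_repetition_sum[OF finite_atLeastAtMost that] by simp
qed

end
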